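(* Consider RLSVI run (with any parameters) on a random finite-horizon MDP $\mathcal{M}$ as in the context. For any episode $\ell \in \mathbb{N}$, if \[ \mathbb{E}\Big[\max_{a\in\mathcal{A}} Q_{\ell,0}(x_0^\ell,a)\Big] \geq \mathbb{E}\Big[\max_{a\in\mathcal{A}} Q^*_{\mathcal{M},0}(x_0^\ell,a)\Big], \] then \[ \mathbb{E}\big[V^*_{\mathcal{M},0}(x_0^\ell) - V^{\pi_\ell}_{\mathcal{M},0}(x_0^\ell)\big] \leq \mathbb{E}\Big[\sum_{t=0}^{H-1} (F_{\ell,t}Q_{\ell,t+1} - F_{\mathcal{M},t}Q_{\ell,t+1})(x_t^\ell, a_t^\ell)\Big]. \]
   Context: Setting. $\mathcal{X}$ finite state set, $\mathcal{A}$ finite action set, horizon $H$. $\mathcal{M}$ is drawn from some prior; it specifies an initial distribution $\rho$ and for each $(t,x,a)$, $t\in\{0,\dots,H-1\}$, a distribution of outcomes $(r_{t+1},x_{t+1}) \in \{0,1\}\times\mathcal{X}$. Episode $\ell$: $x_0^\ell\sim\rho$, and for $t=0,\dots,H-1$ the agent picks $a_t^\ell$ and observes $(r_{t+1}^\ell,x_{t+1}^\ell)$. $V^\pi_{\mathcal{M},0}(x) = \mathbb{E}_{\mathcal{M},\pi}[\sum_{t=0}^{H-1} r_{t+1}\mid x_0=x]$, $V^*_{\mathcal{M},0} = \max_\pi V^\pi_{\mathcal{M},0}$. $F_{\mathcal{M},t}Q(x,a) = \mathbb{E}[r_{t+1} + \max_{a'}Q(x_{t+1},a')\mid \mathcal{M},x_t=x,a_t=a]$;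 $Q^*_{\mathcal{M},H}=0$ and $Q^*_{\mathcal{M},t} = F_{\mathcal{M},t}Q^*_{\mathcal{M},t+1}$. RLSVI with parameters $\bar\theta$, $v>0$, $\lambda>0$: $D_{\ell-1}(t,x,a)$ is the multiset of outcomes $(r^k_{t+1},x^k_{t+1})$ from episodes $k<\ell$ with $x^k_t=x$, $a^k_t=a$, $n_\ell(t,x,a)$ its size, $\sigma^2_\ell(t,x,a) = (1/\lambda + n_\ell(t,x,a)/v)^{-1}$, $w_\ell(t,x,a) = \sigma_\ell(t,x,a)\xi_{\ell,t,x,a}$ with $\xi$'s i.i.d. $N(0,1)$ independent of everything else, and \[F_{\ell,t}Q(x,a) = \sigma^2_\ell(t,x,a)\Big(\frac{\bar\theta_{t,x,a}}{\lambda} + \frac1v\sum_{(r,x')\in D_{\ell-1}(t,x,a)}\big(r + \max_{a'}Q(x',a')\big)\Big) + w_\ell(t,x,a).\] $Q_{\ell,H}=0$, $Q_{\ell,t} = F_{\ell,t}Q_{\ell,t+1}$, and $\pi_\ell$ is greedy: $\pi_{\ell,t}(x)\in\arg\max_aQ_{\ell,t}(x,a)$, so $a^\ell_t = \pi_{\ell,t}(x^\ell_t)$. Expectations are over $\mathcal{M}$, the episode randomness and the RLSVI noise. *)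

theory Defs
  imports "HOL-Probability.Probability"
begin

text \<open>An MDP: initial distribution and, for each (t,x,a), a distribution of
  outcomes (r_{t+1}, x_{t+1}); the reward r in {0,1} is encoded as a bool.\<close>
record ('s, 'a) mdp =
  init  :: "'s pmf"
  trans :: "nat \<Rightarrow> 's \<Rightarrow> 'a \<Rightarrow> (bool \<times> 's) pmf"

type_synonym ('s, 'a) qfun = "'s \<Rightarrow> 'a \<Rightarrow> real"

text \<open>An episode: initial state x_0 and the list of steps (a_t, r_{t+1}, x_{t+1}).\<close>
type_synonym ('s, 'a) episode = "'s \<times> ('a \<times> bool \<times> 's) list"

definition vmax :: "('s, 'a::finite) qfun \<Rightarrow> 's \<Rightarrow> real" where
  "vmax Q x = Max (range (Q x))"

definition bellman :: "('s, 'a::finite) mdp \<Rightarrow> nat \<Rightarrow> ('s, 'a) qfun \<Rightarrow> ('s, 'a) qfun" where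
  "bellman M t Q x a =
     measure_pmf.expectation (trans M t x a) (\<lambda>(r, x'). of_bool r + vmax Q x')"

function backward :: "nat \<Rightarrow> (nat \<Rightarrow> ('s, 'a) qfun \<Rightarrow> ('s, 'a) qfun) \<Rightarrow> nat \<Rightarrow> ('s, 'a) qfun" where
  "backward H Op t = (if H \<le> t then (\<lambda>_ _. 0) else Op t (backward H Op (Suc t)))"
  by pat_completeness auto
termination by (relation "Wellfounded.measure (\<lambda>(H, Op, t). H - t)") auto

definition Qstar :: "('s, 'a::finite) mdp \<Rightarrow> nat \<Rightarrow> nat \<Rightarrow> ('s, 'a) qfun" where
  "Qstar M H t = backward H (bellman M) t"

fun traj :: "('s, 'a) mdp \<Rightarrow> (nat \<Rightarrow> 's \<Rightarrow> 'a) \<Rightarrow> nat \<Rightarrow> nat \<Rightarrow> 's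
             \<Rightarrow> ('a \<times> bool \<times> 's) list pmf" where
  "traj M \<pi> t 0 x = return_pmf []"
| "traj M \<pi> t (Suc n) x =
     bind_pmf (trans M t x (\<pi> t x))
       (\<lambda>(r, x'). map_pmf (\<lambda>rest. (\<pi> t x, r, x') # rest) (traj M \<pi> (Suc t) n x'))"

definition episode_pmf :: "('s, 'a) mdp \<Rightarrow> nat \<Rightarrow> (nat \<Rightarrow> 's \<Rightarrow> 'a) \<Rightarrow> ('s, 'a) episode pmf" where
  "episode_pmf M H \<pi> = bind_pmf (init M) (\<lambda>x0. map_pmf (\<lambda>s. (x0, s)) (traj M \<pi> 0 H x0))"

fun ep_state :: "('s, 'a) episode \<Rightarrow> nat \<Rightarrow> 's" where
  "ep_state (x0, s) 0 = x0"
| "ep_state (x0, s) (Suc t) = snd (snd (s ! t))"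

definition ep_action :: "('s, 'a) episode \<Rightarrow> nat \<Rightarrow> 'a" where
  "ep_action e t = fst (snd e ! t)"

definition Vpi :: "('s, 'a) mdp \<Rightarrow> nat \<Rightarrow> (nat \<Rightarrow> 's \<Rightarrow> 'a) \<Rightarrow> 's \<Rightarrow> real" where
  "Vpi M H \<pi> x = measure_pmf.expectation (traj M \<pi> 0 H x)
                    (\<lambda>s. \<Sum>t<H. of_bool (fst (snd (s ! t))))"

definition Vstar :: "('s, 'a) mdp \<Rightarrow> nat \<Rightarrow> 's \<Rightarrow> real" where
  "Vstar M H x = (SUP \<pi>. Vpi M H \<pi> x)"

definition obs :: "('s, 'a) episode list \<Rightarrow> nat \<Rightarrow> 's \<Rightarrow> 'a \<Rightarrow> (bool \<times> 's) list" where
  "obs h t x a = concat (map (\<lambda>e. if t < length (snd e) \<and> ep_state e t = x \<and> ep_action e t = a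
                                 then [snd (snd e ! t)] else []) h)"

definition sig2 :: "real \<Rightarrow> real \<Rightarrow> nat \<Rightarrow> real" where
  "sig2 lam v n = inverse (1 / lam + real n / v)"

definition rlsvi_op :: "(nat \<Rightarrow> 's \<Rightarrow> 'a \<Rightarrow> real) \<Rightarrow> real \<Rightarrow> real \<Rightarrow> ('s, 'a::finite) episode list
      \<Rightarrow> (nat \<times> 's \<times> 'a \<Rightarrow> real) \<Rightarrow> nat \<Rightarrow> ('s, 'a) qfun \<Rightarrow> ('s, 'a) qfun" where
  "rlsvi_op th v lam h xi t Q x a =
     sig2 lam v (length (obs h t x a)) *
       (th t x a / lam + (1 / v) * (\<Sum>y \<leftarrow> obs h t x a. of_bool (fst y) + vmax Q (snd y)))
     + sqrt (sig2 lam v (length (obs h t x a))) * xi (t, x, a)"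

definition Qrl :: "(nat \<Rightarrow> 's \<Rightarrow> 'a \<Rightarrow> real) \<Rightarrow> real \<Rightarrow> real \<Rightarrow> nat \<Rightarrow> ('s, 'a::finite) episode list
      \<Rightarrow> (nat \<times> 's \<times> 'a \<Rightarrow> real) \<Rightarrow> nat \<Rightarrow> ('s, 'a) qfun" where
  "Qrl th v lam H h xi t = backward H (rlsvi_op th v lam h xi) t"

text \<open>Greedy choice; ties broken towards the least action (a fixed convention).\<close>
definition greedy :: "('a::{finite, linorder} \<Rightarrow> real) \<Rightarrow> 'a" where
  "greedy f = (LEAST a. \<forall>b. f b \<le> f a)"

definition pol :: "(nat \<Rightarrow> 's \<Rightarrow> 'a \<Rightarrow> real) \<Rightarrow> real \<Rightarrow> real \<Rightarrow> nat \<Rightarrow> ('s, 'a::{finite,linorder}) episode list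
      \<Rightarrow> (nat \<times> 's \<times> 'a \<Rightarrow> real) \<Rightarrow> nat \<Rightarrow> 's \<Rightarrow> 'a" where
  "pol th v lam H h xi t x = greedy (Qrl th v lam H h xi t x)"

definition noiseM :: "nat \<Rightarrow> (nat \<times> 's::finite \<times> 'a::finite \<Rightarrow> real) measure" where
  "noiseM H = PiM ({..<H} \<times> UNIV) (\<lambda>_. std_normal_distribution)"

fun histM :: "(nat \<Rightarrow> 's \<Rightarrow> 'a \<Rightarrow> real) \<Rightarrow> real \<Rightarrow> real \<Rightarrow> nat \<Rightarrow> ('s::finite, 'a::{finite,linorder}) mdp
      \<Rightarrow> nat \<Rightarrow> ('s, 'a) episode list measure" where
  "histM th v lam H M 0 = return (count_space UNIV) []"
| "histM th v lam H M (Suc k) =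
     histM th v lam H M k \<bind> (\<lambda>h. noiseM H \<bind> (\<lambda>xi.
       measure_pmf (episode_pmf M H (pol th v lam H h xi)) \<bind> (\<lambda>e.
         return (count_space UNIV) (h @ [e]))))"

text \<open>Expectation, in episode l, of a quantity depending on the MDP M, the history h
  of episodes 0..l-1, the RLSVI noise xi of episode l and the episode l itself.\<close>
definition rl_expect :: "(nat \<Rightarrow> 's \<Rightarrow> 'a \<Rightarrow> real) \<Rightarrow> real \<Rightarrow> real \<Rightarrow> nat
      \<Rightarrow> ('s::finite, 'a::{finite,linorder}) mdp measure \<Rightarrow> nat
      \<Rightarrow> (('s, 'a) mdp \<Rightarrow> ('s, 'a) episode list \<Rightarrow> (nat \<times> 's \<times> 'a \<Rightarrow> real) \<Rightarrow> ('s, 'a) episode \<Rightarrow> real)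
      \<Rightarrow> real" where
  "rl_expect th v lam H prior l f =
     (\<integral>M. (\<integral>h. (\<integral>xi. (\<integral>e. f M h xi e
                 \<partial>measure_pmf (episode_pmf M H (pol th v lam H h xi)))
               \<partial>noiseM H)
             \<partial>histM th v lam H M l)
        \<partial>prior)"

end

theory Submission
  imports Defs
begin

(* For fixed MDP, history and noise, telescoping the RLSVI estimates along the trajectory of
   their own greedy policy gives
     vmax Q_{l,0}(x_0) - V^{pi_l}(x_0) = E[sum_t (F_{l,t} Q_{l,t+1} - F_{M,t} Q_{l,t+1})(x_t, a_t)],
   and the same telescoping for Q^* shows V^* = vmax Q^*_{M,0}. So the regret of the episode is
   the optimism gap vmax Q^*_{M,0} - vmax Q_{l,0} at x_0 plus the Bellman errors, and the
   hypothesis makes the expected optimism gap nonpositive. Taking expectations over episode,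
   noise, history and prior is linear because every term is integrable: the estimates are bounded
   by an integrable function of the Gaussian noise, and they are measurable in the prior since the
   greedy policy takes only finitely many values on the horizon. *)

section \<open>Trajectories\<close>

lemma ep_state_Cons_Suc [simp]: "ep_state (x, c # s) (Suc i) = ep_state (snd (snd c), s) i"
  by (cases i) simp_all

declare ep_state.simps(2) [simp del]

lemma ep_action_Cons_Suc [simp]: "ep_action (x, c # s) (Suc i) = ep_action (snd (snd c), s) i"
  by (simp add: ep_action_def)

lemma ep_action_Cons_0 [simp]: "ep_action (x, c # s) 0 = fst c"
  by (simp add: ep_action_def)

lemma set_pmf_traj:
  assumes "s \<in> set_pmf (traj M \<pi> t n x)"
  shows "length s = n \<and> (\<forall>i<n. ep_action (x, s) i = \<pi> (t + i) (ep_state (x, s) i))"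
  using assms
proof (induction n arbitrary: t x s)
  case (Suc n)
  then obtain r x' s' where s: "s = (\<pi> t x, r, x') # s'"
    and s': "s' \<in> set_pmf (traj M \<pi> (Suc t) n x')"
    by auto
  have "ep_action (x, s) i = \<pi> (t + i) (ep_state (x, s) i)" if "i < Suc n" for i
    using that Suc.IH[OF s'] by (cases i) (simp_all add: s)
  then show ?case
    using Suc.IH[OF s'] by (simp add: s)
qed simp

lemma finite_set_pmf_traj:
  "finite (set_pmf (traj M \<pi> t n (x :: 's::finite)) :: ('a::finite \<times> bool \<times> 's) list set)"
proof (rule finite_subset)
  show "set_pmf (traj M \<pi> t n x) \<subseteq> {s. set s \<subseteq> UNIV \<and> length s = n}"
    using set_pmf_traj[of _ M \<pi> t n x] by auto
qed (rule finite_lists_length_eq, simp)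

lemma integrable_traj [simp]:
  fixes F :: "_ \<Rightarrow> real"
  shows "integrable (measure_pmf (traj (M :: ('s::finite, 'a::finite) mdp) \<pi> t n x)) F"
  by (rule integrable_measure_pmf_finite) (rule finite_set_pmf_traj)

lemma integrable_pmf_finite_type [simp]:
  fixes f :: "'b::finite \<Rightarrow> real"
  shows "integrable (measure_pmf p) f"
  by (rule integrable_measure_pmf_finite) simp

lemma integral_bind_pmf_finite:
  fixes f :: "'b \<Rightarrow> real"
  assumes fin: "finite (set_pmf (bind_pmf p q))"
  shows "(\<integral>y. f y \<partial>measure_pmf (bind_pmf p q)) = (\<integral>x. (\<integral>y. f y \<partial>measure_pmf (q x)) \<partial>measure_pmf p)"
proof -
  let ?A = "set_pmf (bind_pmf p q)"
  \<comment> \<open>Truncated to the finite support, \<open>f\<close> becomes bounded, as \<open>integral_bind\<close> requires.\<close>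
  define g where "g y = f y * indicator ?A y" for y
  define B where "B = (\<Sum>z\<in>?A. \<bar>f z\<bar>)"
  have g_bound: "\<bar>g y\<bar> \<le> B" for y
  proof (cases "y \<in> ?A")
    case True
    then show ?thesis using member_le_sum[OF True _ fin, of "\<lambda>z. \<bar>f z\<bar>"] by (simp add: g_def B_def)
  qed (simp add: g_def B_def sum_nonneg)
  have "(\<integral>y. f y \<partial>measure_pmf (bind_pmf p q)) = (\<integral>y. g y \<partial>measure_pmf (bind_pmf p q))"
    by (intro integral_cong_AE) (simp_all add: g_def AE_measure_pmf_iff)
  also have "\<dots> = (\<integral>x. (\<integral>y. g y \<partial>measure_pmf (q x)) \<partial>measure_pmf p)"
    unfolding measure_pmf_bind
    by (rule integral_bind[where K = "count_space UNIV" and B = B and B' = 1])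
       (simp_all add: g_bound measure_pmf.emeasure_space_1 measure_pmf.finite_measure
          measure_pmf_in_subprob_algebra)
  also have "\<dots> = (\<integral>x. (\<integral>y. f y \<partial>measure_pmf (q x)) \<partial>measure_pmf p)"
    by (intro integral_cong_AE)
       (auto simp: AE_measure_pmf_iff g_def split: split_indicator intro!: integral_cong_AE)
  finally show ?thesis .
qed

lemma integral_traj_Suc:
  fixes F :: "_ \<Rightarrow> real"
  shows "(\<integral>s. F s \<partial>measure_pmf (traj (M :: ('s::finite, 'a::finite) mdp) \<pi> t (Suc n) x)) =
    (\<integral>y. (\<integral>s. F ((\<pi> t x, fst y, snd y) # s) \<partial>measure_pmf (traj M \<pi> (Suc t) n (snd y)))
       \<partial>measure_pmf (trans M t x (\<pi> t x)))"
proof -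
  have "(\<integral>s. F s \<partial>measure_pmf (traj M \<pi> t (Suc n) x)) =
    (\<integral>y. (\<integral>s. F s \<partial>measure_pmf ((\<lambda>(r, x'). map_pmf (\<lambda>rest. (\<pi> t x, r, x') # rest) (traj M \<pi> (Suc t) n x')) y))
       \<partial>measure_pmf (trans M t x (\<pi> t x)))"
    unfolding traj.simps
    by (rule integral_bind_pmf_finite) (simp only: traj.simps(2)[symmetric] finite_set_pmf_traj)
  then show ?thesis by (simp add: split_beta)
qed

lemma greedy_exists:
  fixes f :: "'a::finite \<Rightarrow> real"
  shows "\<exists>a. \<forall>b. f b \<le> f a"
proof -
  have "Max (range f) \<in> range f" by (rule Max_in) auto
  then obtain a where a: "f a = Max (range f)" by (metis rangeE)
  have "\<forall>b. f b \<le> f a" unfolding a by (auto intro: Max_ge)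
  then show ?thesis by blast
qed

lemma greedy_eq_Min:
  fixes f :: "'a::{finite,linorder} \<Rightarrow> real"
  shows "greedy f = Min {a. \<forall>b. f b \<le> f a}"
  unfolding greedy_def by (rule Least_Min) (simp_all add: greedy_exists)

lemma greedy_is_max:
  fixes f :: "'a::{finite,linorder} \<Rightarrow> real"
  shows "f b \<le> f (greedy f)"
proof -
  have "greedy f \<in> {a. \<forall>b. f b \<le> f a}"
    unfolding greedy_eq_Min by (rule Min_in) (simp_all add: greedy_exists)
  then show ?thesis by simp
qed

lemma vmax_ge: "Q y a \<le> vmax (Q :: ('s, 'a::finite) qfun) y"
  unfolding vmax_def by (rule Max_ge) auto

lemma vmax_eq_greedy: "vmax Q y = Q y (greedy (Q y))"
  unfolding vmax_def by (rule Max_eqI) (auto intro: greedy_is_max)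

lemma abs_vmax_le:
  fixes Q :: "('s, 'a::{finite,linorder}) qfun"
  assumes "\<And>a. \<bar>Q y a\<bar> \<le> K"
  shows "\<bar>vmax Q y\<bar> \<le> K"
  using assms by (simp add: vmax_eq_greedy)

section \<open>The value gap of a backward recursion\<close>

declare backward.simps [simp del]

lemma backward_ge [simp]: "H \<le> t \<Longrightarrow> backward H Op t = (\<lambda>_ _. 0)"
  by (simp add: backward.simps)

lemma backward_less: "t < H \<Longrightarrow> backward H Op t = Op t (backward H Op (Suc t))"
  by (simp add: backward.simps)

text \<open>Along a trajectory, \<open>vmax (Q t)\<close> at the current state is compared with the one-step
  backup of \<open>Q (t + 1)\<close> under the true dynamics, whose conditional expectation is the next
  reward plus \<open>vmax (Q (t + 1))\<close> at the next state; the differences telescope.\<close>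

lemma vmax_minus_return_telescope:
  fixes Q :: "nat \<Rightarrow> ('s::finite, 'a::finite) qfun"
  assumes "\<And>y. vmax (Q (t + n)) y = 0"
  shows "vmax (Q t) x - (\<integral>s. (\<Sum>i<n. of_bool (fst (snd (s ! i)))) \<partial>measure_pmf (traj M \<pi> t n x)) =
    (\<integral>s. (\<Sum>i<n. vmax (Q (t + i)) (ep_state (x, s) i)
                 - bellman M (t + i) (Q (Suc (t + i))) (ep_state (x, s) i) (ep_action (x, s) i))
      \<partial>measure_pmf (traj M \<pi> t n x))"
  using assms
proof (induction n arbitrary: t x)
  case (Suc n)
  let ?T = "trans M t x (\<pi> t x)"
  define R where "R y = (\<integral>s. (\<Sum>i<n. of_bool (fst (snd (s ! i))) :: real) \<partial>measure_pmf (traj M \<pi> (Suc t) n y))" for y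
  define D where "D i y a = vmax (Q i) y - bellman M i (Q (Suc i)) y a" for i y a
  have IH: "(\<integral>s. (\<Sum>i<n. D (Suc t + i) (ep_state (y, s) i) (ep_action (y, s) i))
      \<partial>measure_pmf (traj M \<pi> (Suc t) n y)) = vmax (Q (Suc t)) y - R y" for y
    using Suc.IH[of "Suc t" y] Suc.prems by (simp add: D_def R_def)
  have "bellman M t (Q (Suc t)) x (\<pi> t x) =
      (\<integral>y. of_bool (fst y) + vmax (Q (Suc t)) (snd y) \<partial>measure_pmf ?T)"
    unfolding bellman_def by (intro Bochner_Integration.integral_cong) (auto split: prod.splits)
  then have D_step: "D t x (\<pi> t x) =
      vmax (Q t) x - (\<integral>y. of_bool (fst y) \<partial>measure_pmf ?T) - (\<integral>y. vmax (Q (Suc t)) (snd y) \<partial>measure_pmf ?T)"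
    by (simp add: D_def integral_add)
  have "(\<integral>s. (\<Sum>i<Suc n. of_bool (fst (snd (s ! i))) :: real) \<partial>measure_pmf (traj M \<pi> t (Suc n) x)) =
      (\<integral>y. of_bool (fst y) + R (snd y) \<partial>measure_pmf ?T)" (is "?return = _")
    unfolding integral_traj_Suc sum.lessThan_Suc_shift R_def by simp
  also have "\<dots> = (\<integral>y. of_bool (fst y) \<partial>measure_pmf ?T) + (\<integral>y. R (snd y) \<partial>measure_pmf ?T)"
    by (simp add: integral_add)
  finally have return_step:
    "?return = (\<integral>y. of_bool (fst y) \<partial>measure_pmf ?T) + (\<integral>y. R (snd y) \<partial>measure_pmf ?T)" .
  have "(\<integral>s. (\<Sum>i<Suc n. D (t + i) (ep_state (x, s) i) (ep_action (x, s) i))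
      \<partial>measure_pmf (traj M \<pi> t (Suc n) x)) =
      (\<integral>y. D t x (\<pi> t x) + (vmax (Q (Suc t)) (snd y) - R (snd y)) \<partial>measure_pmf ?T)"
    unfolding integral_traj_Suc sum.lessThan_Suc_shift IH[symmetric] by simp
  also have "\<dots> = D t x (\<pi> t x) + (\<integral>y. vmax (Q (Suc t)) (snd y) \<partial>measure_pmf ?T) - (\<integral>y. R (snd y) \<partial>measure_pmf ?T)"
    by (simp add: integral_add integral_diff)
  finally show ?case
    using D_step return_step by (simp add: D_def)
qed simp

lemma vmax_backward_minus_Vpi:
  fixes M :: "('s::finite, 'a::finite) mdp"
  shows "vmax (backward H Op 0) x - Vpi M H \<pi> x =
    (\<integral>s. (\<Sum>i<H. vmax (backward H Op i) (ep_state (x, s) i)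
                 - bellman M i (backward H Op (Suc i)) (ep_state (x, s) i) (ep_action (x, s) i))
      \<partial>measure_pmf (traj M \<pi> 0 H x))"
proof -
  have "vmax (backward H Op (0 + H)) y = 0" for y
    by (simp add: vmax_def)
  from vmax_minus_return_telescope[of "backward H Op", OF this, of x M \<pi>]
  show ?thesis by (simp add: Vpi_def)
qed

lemma bellman_Qstar_Suc: "t < H \<Longrightarrow> bellman M t (Qstar M H (Suc t)) = Qstar M H t"
  by (simp add: Qstar_def backward_less)

lemma rlsvi_op_Qrl_Suc:
  "t < H \<Longrightarrow> rlsvi_op th v lam h xi t (Qrl th v lam H h xi (Suc t)) = Qrl th v lam H h xi t"
  by (simp add: Qrl_def backward_less)

lemma vmax_Qstar_minus_Vpi:
  fixes M :: "('s::finite, 'a::finite) mdp"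
  shows "vmax (Qstar M H 0) x - Vpi M H \<pi> x =
    (\<integral>s. (\<Sum>i<H. vmax (Qstar M H i) (ep_state (x, s) i) - Qstar M H i (ep_state (x, s) i) (ep_action (x, s) i))
      \<partial>measure_pmf (traj M \<pi> 0 H x))"
  using vmax_backward_minus_Vpi[of H "bellman M" x M \<pi>]
  by (simp add: Qstar_def [symmetric] bellman_Qstar_Suc)

lemma Vstar_eq_vmax_Qstar:
  fixes M :: "('s::finite, 'a::{finite,linorder}) mdp"
  shows "Vstar M H x = vmax (Qstar M H 0) x"
proof -
  let ?greedy = "\<lambda>t y. greedy (Qstar M H t y)"
  have "Vpi M H \<pi> x \<le> vmax (Qstar M H 0) x" for \<pi>
  proof -
    have "0 \<le> (\<integral>s. (\<Sum>i<H. vmax (Qstar M H i) (ep_state (x, s) i)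
        - Qstar M H i (ep_state (x, s) i) (ep_action (x, s) i)) \<partial>measure_pmf (traj M \<pi> 0 H x))"
      by (intro integral_nonneg_AE AE_I2 sum_nonneg) (simp add: vmax_ge)
    then show ?thesis using vmax_Qstar_minus_Vpi[of M H x \<pi>] by simp
  qed
  moreover have "Vpi M H ?greedy x = vmax (Qstar M H 0) x"
  proof -
    have "(\<integral>s. (\<Sum>i<H. vmax (Qstar M H i) (ep_state (x, s) i) - Qstar M H i (ep_state (x, s) i) (ep_action (x, s) i))
        \<partial>measure_pmf (traj M ?greedy 0 H x)) = (\<integral>s. 0 \<partial>measure_pmf (traj M ?greedy 0 H x))"
      using set_pmf_traj[of _ M ?greedy 0 H x]
      by (intro integral_cong_AE) (simp_all add: AE_measure_pmf_iff vmax_eq_greedy)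
    then show ?thesis using vmax_Qstar_minus_Vpi[of M H x ?greedy] by simp
  qed
  ultimately show ?thesis
    unfolding Vstar_def by (intro cSup_eq_maximum) (auto, metis rangeI)
qed

lemma vmax_Qrl_minus_Vpi:
  fixes h :: "('s::finite, 'a::{finite,linorder}) episode list"
  shows "vmax (Qrl th v lam H h xi 0) x - Vpi M H (pol th v lam H h xi) x =
    (\<integral>s. (\<Sum>i<H. rlsvi_op th v lam h xi i (Qrl th v lam H h xi (Suc i)) (ep_state (x, s) i) (ep_action (x, s) i)
       - bellman M i (Qrl th v lam H h xi (Suc i)) (ep_state (x, s) i) (ep_action (x, s) i))
      \<partial>measure_pmf (traj M (pol th v lam H h xi) 0 H x))"
proof -
  let ?Q = "Qrl th v lam H h xi" and ?\<pi> = "pol th v lam H h xi"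
  have greedy_step: "vmax (?Q i) (ep_state (x, s) i)
      = rlsvi_op th v lam h xi i (?Q (Suc i)) (ep_state (x, s) i) (ep_action (x, s) i)"
    if "s \<in> set_pmf (traj M ?\<pi> 0 H x)" "i < H" for s i
    using set_pmf_traj[OF that(1)] that(2)
    by (simp add: rlsvi_op_Qrl_Suc vmax_eq_greedy pol_def)
  have "vmax (?Q 0) x - Vpi M H ?\<pi> x =
    (\<integral>s. (\<Sum>i<H. vmax (?Q i) (ep_state (x, s) i) - bellman M i (?Q (Suc i)) (ep_state (x, s) i) (ep_action (x, s) i))
      \<partial>measure_pmf (traj M ?\<pi> 0 H x))"
    using vmax_backward_minus_Vpi[of H "rlsvi_op th v lam h xi" x M ?\<pi>] by (simp only: Qrl_def)
  also have "\<dots> = (\<integral>s. (\<Sum>i<H. rlsvi_op th v lam h xi i (?Q (Suc i)) (ep_state (x, s) i) (ep_action (x, s) i)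
       - bellman M i (?Q (Suc i)) (ep_state (x, s) i) (ep_action (x, s) i)) \<partial>measure_pmf (traj M ?\<pi> 0 H x))"
    by (intro integral_cong_AE) (simp_all add: AE_measure_pmf_iff greedy_step)
  finally show ?thesis .
qed

lemma integral_episode_pmf:
  fixes F :: "_ \<Rightarrow> real"
  shows "(\<integral>e. F e \<partial>measure_pmf (episode_pmf (M :: ('s::finite, 'a::finite) mdp) H \<pi>)) =
     (\<integral>x. (\<integral>s. F (x, s) \<partial>measure_pmf (traj M \<pi> 0 H x)) \<partial>measure_pmf (init M))"
  unfolding episode_pmf_def
  by (subst integral_bind_pmf_finite) (simp_all add: finite_set_pmf_traj)

lemma episode_regret_decomposition:
  fixes M :: "('s::finite, 'a::{finite,linorder}) mdp" and H :: nat and th v lam h xi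
  defines "E \<equiv> \<lambda>f. (\<integral>e. f e \<partial>measure_pmf (episode_pmf M H (pol th v lam H h xi)))"
  shows "E (\<lambda>e. Vstar M H (fst e) - Vpi M H (pol th v lam H h xi) (fst e)) =
     E (\<lambda>e. vmax (Qstar M H 0) (fst e)) - E (\<lambda>e. vmax (Qrl th v lam H h xi 0) (fst e))
     + E (\<lambda>e. \<Sum>t<H.
              rlsvi_op th v lam h xi t (Qrl th v lam H h xi (Suc t)) (ep_state e t) (ep_action e t)
              - bellman M t (Qrl th v lam H h xi (Suc t)) (ep_state e t) (ep_action e t))"
  unfolding E_def integral_episode_pmf
  by (simp add: vmax_Qrl_minus_Vpi [symmetric] Vstar_eq_vmax_Qstar integral_diff integral_add)

section \<open>Measurability\<close>

lemma measurable_noise_component: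
  "t < H \<Longrightarrow> (\<lambda>xi. xi (t, y, a)) \<in> borel_measurable (noiseM H)"
  unfolding noiseM_def by measurable

lemma borel_measurable_sum_list_map:
  fixes f :: "'b \<Rightarrow> 'c \<Rightarrow> real"
  shows "(\<And>x. x \<in> set xs \<Longrightarrow> (\<lambda>\<omega>. f x \<omega>) \<in> borel_measurable M) \<Longrightarrow>
    (\<lambda>\<omega>. sum_list (map (\<lambda>x. f x \<omega>) xs)) \<in> borel_measurable M"
  by (induction xs) auto

lemma borel_measurable_vmax:
  fixes Q :: "'b \<Rightarrow> ('s, 'a::finite) qfun"
  shows "(\<And>a. (\<lambda>\<omega>. Q \<omega> y a) \<in> borel_measurable M) \<Longrightarrow> (\<lambda>\<omega>. vmax (Q \<omega>) y) \<in> borel_measurable M"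
  unfolding vmax_def by (rule borel_measurable_Max) simp_all

lemma borel_measurable_Qrl:
  fixes h :: "('s::finite, 'a::{finite,linorder}) episode list"
  shows "(\<lambda>xi. Qrl th v lam H h xi t y a) \<in> borel_measurable (noiseM H)"
proof (cases "t \<le> H")
  case True
  then show ?thesis
  proof (induction t arbitrary: y a rule: inc_induct)
    case (step n)
    have "(\<lambda>xi. rlsvi_op th v lam h xi n (Qrl th v lam H h xi (Suc n)) y a) \<in> borel_measurable (noiseM H)"
      unfolding rlsvi_op_def
      by (intro borel_measurable_add borel_measurable_times borel_measurable_const
            borel_measurable_sum_list_map measurable_noise_component borel_measurable_vmax step.IH step.hyps)
    with step.hyps show ?case by (simp add: rlsvi_op_Qrl_Suc)
  qed (simp add: Qrl_def)
qed (simp add: Qrl_def)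

lemma pol_eq_iff:
  fixes h :: "('s::finite, 'a::{finite,linorder}) episode list"
  shows "pol th v lam H h xi t y = a \<longleftrightarrow>
    (\<forall>b. Qrl th v lam H h xi t y b \<le> Qrl th v lam H h xi t y a) \<and>
    (\<forall>c. (\<forall>b. Qrl th v lam H h xi t y b \<le> Qrl th v lam H h xi t y c) \<longrightarrow> a \<le> c)"
  unfolding pol_def greedy_eq_Min
  by (subst Min_eq_iff) (auto simp: greedy_exists)

lemma pred_pol_eq [measurable]:
  fixes h :: "('s::finite, 'a::{finite,linorder}) episode list"
  shows "Measurable.pred (noiseM H) (\<lambda>xi. pol th v lam H h xi t y = a)"
  unfolding pol_eq_iff
  by (intro pred_intros_logic(3,4) pred_intros_countable(1))
     (simp_all add: pred_def borel_measurable_le borel_measurable_Qrl)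

lemma traj_cong:
  "(\<And>i. t \<le> i \<Longrightarrow> i < t + n \<Longrightarrow> \<pi> i = \<pi>' i) \<Longrightarrow> traj M \<pi> t n x = traj M \<pi>' t n x"
proof (induction n arbitrary: t x)
  case (Suc n)
  have "\<pi> t = \<pi>' t" by (rule Suc.prems) simp_all
  moreover have "traj M \<pi> (Suc t) n x' = traj M \<pi>' (Suc t) n x'" for x'
    by (rule Suc.IH) (rule Suc.prems; simp)
  ultimately show ?case by simp
qed simp

lemma episode_pmf_restrict: "episode_pmf M H (restrict \<pi> {..<H}) = episode_pmf M H \<pi>"
  unfolding episode_pmf_def
  by (intro arg_cong[where f = "bind_pmf (init M)"] ext arg_cong[where f = "map_pmf _"] traj_cong) simp

text \<open>The policy of RLSVI enters an episode only through its first \<open>H\<close> stages, and these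
  range over a finite set; this reduces measurability in the noise to countable case
  distinctions.\<close>

lemma finite_horizon_policies:
  "finite (PiE {..<H} (\<lambda>_. UNIV) :: (nat \<Rightarrow> 's::finite \<Rightarrow> 'a::finite) set)"
  by (rule finite_PiE) simp_all

lemma measurable_restrict_pol:
  fixes h :: "('s::finite, 'a::{finite,linorder}) episode list"
  shows "(\<lambda>xi. restrict (pol th v lam H h xi) {..<H})
    \<in> measurable (noiseM H) (count_space (PiE {..<H} (\<lambda>_. UNIV)))"
proof (subst measurable_count_space_eq2[OF finite_horizon_policies], intro conjI ballI)
  let ?r = "\<lambda>xi. restrict (pol th v lam H h xi) {..<H}"
  show "?r \<in> space (noiseM H) \<rightarrow> PiE {..<H} (\<lambda>_. UNIV)" by simp
  fix \<tau> :: "nat \<Rightarrow> 's \<Rightarrow> 'a" assume \<tau>: "\<tau> \<in> PiE {..<H} (\<lambda>_. UNIV)"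
  have "?r -` {\<tau>} \<inter> space (noiseM H) =
     {xi \<in> space (noiseM H). \<forall>t\<in>{..<H}. \<forall>y. pol th v lam H h xi t y = \<tau> t y}"
    using \<tau> by (auto simp: restrict_def PiE_def extensional_def fun_eq_iff)
  also have "\<dots> \<in> sets (noiseM H)" by measurable
  finally show "?r -` {\<tau>} \<inter> space (noiseM H) \<in> sets (noiseM H)" .
qed

lemma pmf_bind_finite_type:
  fixes p :: "'b::finite pmf"
  shows "pmf (bind_pmf p f) e = (\<Sum>y\<in>UNIV. pmf p y * pmf (f y) e)"
  unfolding pmf_bind by (subst integral_measure_pmf_real[where A = UNIV]) (simp_all add: mult.commute)

lemma pmf_map_Cons:
  "pmf (map_pmf (Cons c) q) s = (case s of [] \<Rightarrow> 0 | c' # s' \<Rightarrow> if c' = c then pmf q s' else 0)"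
  by (cases s) (auto simp: pmf_eq_0_set_pmf pmf_map_inj')

lemma pmf_map_Pair:
  "pmf (map_pmf (Pair x) q) e = (if fst e = x then pmf q (snd e) else 0)"
  by (cases e) (auto simp: pmf_eq_0_set_pmf pmf_map_inj' inj_on_def)

lemma borel_measurable_pmf_traj:
  fixes \<pi> :: "nat \<Rightarrow> 's::finite \<Rightarrow> 'a::finite"
  assumes "\<And>t x a y. (\<lambda>M. pmf (trans M t x a) y) \<in> borel_measurable P"
  shows "(\<lambda>M. pmf (traj M \<pi> t n x) s) \<in> borel_measurable P"
proof (induction n arbitrary: t x s)
  case (Suc n)
  have eq: "pmf (traj M \<pi> t (Suc n) x) s =
     (\<Sum>y\<in>UNIV. pmf (trans M t x (\<pi> t x)) y *
        (case s of [] \<Rightarrow> 0 | c' # s' \<Rightarrow> if c' = (\<pi> t x, y) then pmf (traj M \<pi> (Suc t) n (snd y)) s' else 0))" for M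
    by (simp only: traj.simps pmf_bind_finite_type) (simp add: split_beta pmf_map_Cons)
  show ?case
    unfolding eq
    by (intro borel_measurable_sum borel_measurable_times assms)
       (cases s, auto intro!: measurable_If Suc.IH)
qed simp

lemma borel_measurable_pmf_episode:
  fixes \<pi> :: "nat \<Rightarrow> 's::finite \<Rightarrow> 'a::finite"
  assumes "\<And>x. (\<lambda>M. pmf (init M) x) \<in> borel_measurable P"
    and "\<And>t x a y. (\<lambda>M. pmf (trans M t x a) y) \<in> borel_measurable P"
  shows "(\<lambda>M. pmf (episode_pmf M H \<pi>) e) \<in> borel_measurable P"
proof -
  have "pmf (episode_pmf M H \<pi>) e =
     (\<Sum>x\<in>UNIV. pmf (init M) x * (if fst e = x then pmf (traj M \<pi> 0 H x) (snd e) else 0))" for M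
    unfolding episode_pmf_def pmf_bind_finite_type pmf_map_Pair ..
  then show ?thesis
    using assms borel_measurable_pmf_traj[OF assms(2)] by simp
qed

lemma borel_measurable_pmf_episode_pol:
  fixes h :: "('s::finite, 'a::{finite,linorder}) episode list"
  assumes "\<And>x. (\<lambda>M. pmf (init M) x) \<in> borel_measurable P"
    and "\<And>t x a y. (\<lambda>M. pmf (trans M t x a) y) \<in> borel_measurable P"
  shows "(\<lambda>(M, xi). pmf (episode_pmf M H (pol th v lam H h xi)) e) \<in> borel_measurable (P \<Otimes>\<^sub>M noiseM H)"
proof -
  have "(\<lambda>p. pmf (episode_pmf (fst p) H (restrict (pol th v lam H h (snd p)) {..<H})) e)
      \<in> borel_measurable (P \<Otimes>\<^sub>M noiseM H)"
  proof (rule measurable_compose_countable'[where I = "PiE {..<H} (\<lambda>_. UNIV)"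
        and f = "\<lambda>\<tau> p. pmf (episode_pmf (fst p) H \<tau>) e"])
    show "(\<lambda>p. pmf (episode_pmf (fst p) H \<tau>) e) \<in> borel_measurable (P \<Otimes>\<^sub>M noiseM H)" for \<tau>
      by (rule measurable_compose[OF measurable_fst borel_measurable_pmf_episode[OF assms]])
    show "(\<lambda>p. restrict (pol th v lam H h (snd p)) {..<H})
        \<in> measurable (P \<Otimes>\<^sub>M noiseM H) (count_space (PiE {..<H} (\<lambda>_. UNIV)))"
      by (rule measurable_compose[OF measurable_snd measurable_restrict_pol])
  qed (rule countable_finite[OF finite_horizon_policies])
  then show ?thesis by (simp add: episode_pmf_restrict split_beta')
qed

lemma prob_space_noiseM: "prob_space (noiseM H)"
  unfolding noiseM_def
  by (rule prob_space_PiM) (simp add: prob_space_normal_density)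

lemma measurable_episode_pmf_append:
  fixes h :: "('s::finite, 'a::{finite,linorder}) episode list"
  shows "(\<lambda>xi. measure_pmf (map_pmf (\<lambda>e. h @ [e]) (episode_pmf M H (pol th v lam H h xi))))
     \<in> noiseM H \<rightarrow>\<^sub>M prob_algebra (count_space UNIV)"
proof -
  have "(\<lambda>xi. measure_pmf (map_pmf (\<lambda>e. h @ [e]) (episode_pmf M H (restrict (pol th v lam H h xi) {..<H}))))
     \<in> noiseM H \<rightarrow>\<^sub>M prob_algebra (count_space UNIV)"
    by (rule measurable_compose[OF measurable_restrict_pol])
       (simp add: space_prob_algebra prob_space_measure_pmf)
  then show ?thesis by (simp add: episode_pmf_restrict)
qed

definition history_step :: "(nat \<Rightarrow> 's \<Rightarrow> 'a \<Rightarrow> real) \<Rightarrow> real \<Rightarrow> real \<Rightarrow> nat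
    \<Rightarrow> ('s::finite, 'a::{finite,linorder}) mdp \<Rightarrow> ('s, 'a) episode list \<Rightarrow> ('s, 'a) episode list measure" where
  "history_step th v lam H M h =
     noiseM H \<bind> (\<lambda>xi. measure_pmf (map_pmf (\<lambda>e. h @ [e]) (episode_pmf M H (pol th v lam H h xi))))"

lemma histM_Suc_bind: "histM th v lam H M (Suc k) = histM th v lam H M k \<bind> history_step th v lam H M"
  unfolding history_step_def [abs_def] by (simp add: bind_return_distr' map_pmf_rep_eq)

lemma history_step_in_prob_algebra:
  "history_step th v lam H M h \<in> space (prob_algebra (count_space UNIV))"
proof -
  have noise: "noiseM H \<in> space (prob_algebra (noiseM H))"
    by (simp add: space_prob_algebra prob_space_noiseM)
  show ?thesis
    unfolding space_prob_algebra history_step_def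
    using prob_space_bind'[OF noise measurable_episode_pmf_append]
      sets_bind'[OF noise measurable_episode_pmf_append]
    by blast
qed

lemma measurable_history_step:
  assumes "sets N = sets (count_space UNIV)"
  shows "history_step th v lam H M \<in> N \<rightarrow>\<^sub>M prob_algebra (count_space UNIV)"
  unfolding measurable_cong_sets[OF assms refl]
  by (simp, intro Pi_I history_step_in_prob_algebra)

lemma histM_in_prob_algebra: "histM th v lam H M k \<in> space (prob_algebra (count_space UNIV))"
proof (induction k)
  case (Suc k)
  note step = measurable_history_step[OF refl, of th v lam H M]
  from prob_space_bind'[OF Suc.IH step] sets_bind'[OF Suc.IH step] show ?case
    unfolding histM_Suc_bind space_prob_algebra by blast
qed (simp add: space_prob_algebra prob_space_return)

lemma prob_space_histM: "prob_space (histM th v lam H M k)"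
  using histM_in_prob_algebra[of th v lam H M k] by (simp add: space_prob_algebra)

lemma sets_histM: "sets (histM th v lam H M k) = sets (count_space UNIV)"
  using histM_in_prob_algebra[of th v lam H M k] by (simp add: space_prob_algebra)

lemma integral_histM_Suc:
  fixes g :: "('s::finite, 'a::{finite,linorder}) episode list \<Rightarrow> real"
  assumes g_bound: "\<And>h. \<bar>g h\<bar> \<le> B"
  shows "(\<integral>h. g h \<partial>histM th v lam H M (Suc k)) =
    (\<integral>h. (\<integral>xi. (\<integral>e. g (h @ [e]) \<partial>measure_pmf (episode_pmf M H (pol th v lam H h xi))) \<partial>noiseM H)
      \<partial>histM th v lam H M k)"
proof -
  have step_prob: "prob_space (history_step th v lam H M h)" for h
    using history_step_in_prob_algebra[of th v lam H M h] by (simp add: space_prob_algebra)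
  have "(\<integral>h. g h \<partial>histM th v lam H M (Suc k)) =
      (\<integral>h. (\<integral>h'. g h' \<partial>history_step th v lam H M h) \<partial>histM th v lam H M k)"
    unfolding histM_Suc_bind
    by (rule integral_bind[where K = "count_space UNIV" and B = B and B' = 1])
       (simp_all add: g_bound prob_space.finite_measure prob_space_histM step_prob
         prob_space.emeasure_space_1 measurable_prob_algebraD[OF measurable_history_step[OF sets_histM]])
  also have "\<dots> = (\<integral>h. (\<integral>xi. (\<integral>e. g (h @ [e]) \<partial>measure_pmf (episode_pmf M H (pol th v lam H h xi))) \<partial>noiseM H)
      \<partial>histM th v lam H M k)"
  proof (rule Bochner_Integration.integral_cong[OF refl])
    fix h
    have "(\<integral>h'. g h' \<partial>history_step th v lam H M h) =
        (\<integral>xi. (\<integral>h'. g h' \<partial>measure_pmf (map_pmf (\<lambda>e. h @ [e]) (episode_pmf M H (pol th v lam H h xi)))) \<partial>noiseM H)"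
      unfolding history_step_def
      by (rule integral_bind[where K = "count_space UNIV" and B = B and B' = 1])
         (simp_all add: g_bound measure_pmf.emeasure_space_1 prob_space.finite_measure prob_space_noiseM
           measurable_prob_algebraD[OF measurable_episode_pmf_append])
    then show "(\<integral>h'. g h' \<partial>history_step th v lam H M h) =
        (\<integral>xi. (\<integral>e. g (h @ [e]) \<partial>measure_pmf (episode_pmf M H (pol th v lam H h xi))) \<partial>noiseM H)"
      by simp
  qed
  finally show ?thesis .
qed

section \<open>Bounds\<close>

lemma sig2_pos: "lam > 0 \<Longrightarrow> v > 0 \<Longrightarrow> 0 < sig2 lam v n"
  unfolding sig2_def by (simp add: add_pos_nonneg)

lemma sig2_le:
  assumes "lam > 0" "v > 0"
  shows "sig2 lam v n \<le> lam"
proof -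
  have "inverse (1 / lam + real n / v) \<le> inverse (1 / lam)"
    using assms by (intro le_imp_inverse_le) simp_all
  then show ?thesis by (simp add: sig2_def)
qed

text \<open>The posterior mean is a convex combination of the prior mean \<open>T\<close> and the empirical mean
  \<open>L / n\<close>.\<close>

lemma abs_posterior_mean_le:
  assumes lam: "lam > 0" and v: "v > 0" and L: "\<bar>L\<bar> \<le> real n * K" and K: "0 \<le> K"
  shows "\<bar>sig2 lam v n * (T / lam + (1 / v) * L)\<bar> \<le> \<bar>T\<bar> + K"
proof -
  define d where "d = 1 / lam + real n / v"
  have d_pos: "0 < d" using lam v unfolding d_def by (simp add: add_pos_nonneg)
  have "\<bar>T / lam + (1 / v) * L\<bar> \<le> \<bar>T / lam\<bar> + \<bar>(1 / v) * L\<bar>"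
    by (rule abs_triangle_ineq)
  also have "\<dots> \<le> \<bar>T\<bar> / lam + (1 / v) * (real n * K)"
    using L lam v by (simp add: abs_mult divide_right_mono)
  also have "\<dots> \<le> (\<bar>T\<bar> + K) * d"
  proof -
    have "(\<bar>T\<bar> + K) * d = \<bar>T\<bar> / lam + (1 / v) * (real n * K) + (\<bar>T\<bar> * (real n / v) + K / lam)"
      using lam v by (simp add: d_def field_simps)
    moreover have "0 \<le> \<bar>T\<bar> * (real n / v) + K / lam" using K lam v by simp
    ultimately show ?thesis by linarith
  qed
  finally have "\<bar>T / lam + (1 / v) * L\<bar> / d \<le> \<bar>T\<bar> + K"
    using d_pos by (simp add: divide_le_eq)
  then show ?thesis
    using d_pos by (simp add: sig2_def d_def abs_mult inverse_eq_divide)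
qed

lemma abs_sum_list_map_le:
  fixes f :: "'b \<Rightarrow> real"
  assumes "\<And>x. \<bar>f x\<bar> \<le> K"
  shows "\<bar>sum_list (map f xs)\<bar> \<le> real (length xs) * K"
proof (induction xs)
  case (Cons x xs)
  have "\<bar>sum_list (map f (x # xs))\<bar> \<le> \<bar>f x\<bar> + \<bar>sum_list (map f xs)\<bar>"
    by (simp add: abs_triangle_ineq)
  also have "\<dots> \<le> K + real (length xs) * K"
    using assms Cons.IH by (intro add_mono) auto
  finally show ?case by (simp add: algebra_simps)
qed simp

lemma abs_reward_plus_vmax_le:
  fixes Q :: "('s, 'a::{finite,linorder}) qfun"
  assumes "\<And>y a. \<bar>Q y a\<bar> \<le> K"
  shows "\<bar>of_bool r + vmax Q y\<bar> \<le> 1 + K"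
proof -
  have "\<bar>vmax Q y\<bar> \<le> K" by (rule abs_vmax_le) (rule assms)
  then show ?thesis by (cases r) (simp_all add: abs_le_iff)
qed

lemma bellman_eq_sum:
  fixes M :: "('s::finite, 'a::finite) mdp"
  shows "bellman M t Q y a = (\<Sum>z\<in>UNIV. pmf (trans M t y a) z * (of_bool (fst z) + vmax Q (snd z)))"
  unfolding bellman_def
  by (subst integral_measure_pmf_real[where A = UNIV]) (simp_all add: split_beta mult.commute)

lemma abs_bellman_le:
  fixes M :: "('s::finite, 'a::{finite,linorder}) mdp"
  assumes "\<And>y a. \<bar>Q y a\<bar> \<le> K"
  shows "\<bar>bellman M t Q y a\<bar> \<le> 1 + K"
proof -
  let ?p = "trans M t y a"
  have "\<bar>bellman M t Q y a\<bar> \<le> (\<Sum>z\<in>UNIV. \<bar>pmf ?p z * (of_bool (fst z) + vmax Q (snd z))\<bar>)"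
    unfolding bellman_eq_sum by (rule sum_abs)
  also have "\<dots> \<le> (\<Sum>z\<in>UNIV. pmf ?p z * (1 + K))"
  proof (rule sum_mono)
    fix z
    have "\<bar>of_bool (fst z) + vmax Q (snd z)\<bar> \<le> 1 + K"
      by (rule abs_reward_plus_vmax_le[OF assms])
    then show "\<bar>pmf ?p z * (of_bool (fst z) + vmax Q (snd z))\<bar> \<le> pmf ?p z * (1 + K)"
      by (simp add: abs_mult mult_left_mono)
  qed
  also have "\<dots> = 1 + K"
    by (simp add: sum_distrib_right[symmetric] sum_pmf_eq_1)
  finally show ?thesis .
qed

lemma abs_Qstar_le:
  fixes M :: "('s::finite, 'a::{finite,linorder}) mdp"
  shows "\<bar>Qstar M H t y a\<bar> \<le> real (H - t)"
proof (cases "t \<le> H")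
  case True
  then show ?thesis
  proof (induction t arbitrary: y a rule: inc_induct)
    case (step n)
    have "\<bar>bellman M n (Qstar M H (Suc n)) y a\<bar> \<le> 1 + real (H - Suc n)"
      by (rule abs_bellman_le) (rule step.IH)
    with step.hyps show ?case by (simp add: bellman_Qstar_Suc Suc_diff_Suc)
  qed (simp add: Qstar_def)
qed (simp add: Qstar_def)

definition rlsvi_bound :: "real \<Rightarrow> nat \<Rightarrow> (nat \<Rightarrow> 's::finite \<Rightarrow> 'a::finite \<Rightarrow> real)
    \<Rightarrow> (nat \<times> 's \<times> 'a \<Rightarrow> real) \<Rightarrow> real" where
  "rlsvi_bound lam H th xi = 1 + (\<Sum>(t, y, a)\<in>{..<H} \<times> UNIV. \<bar>th t y a\<bar>) + sqrt lam * (\<Sum>k\<in>{..<H} \<times> UNIV. \<bar>xi k\<bar>)"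

lemma rlsvi_bound_ge_1:
  assumes "lam > 0"
  shows "1 \<le> rlsvi_bound lam H th xi"
proof -
  have "0 \<le> (\<Sum>(t, y, a)\<in>{..<H} \<times> UNIV. \<bar>th t y a\<bar>)"
    by (rule sum_nonneg) auto
  moreover have "0 \<le> sqrt lam * (\<Sum>k\<in>{..<H} \<times> UNIV. \<bar>xi k\<bar>)"
    using assms by (intro mult_nonneg_nonneg sum_nonneg) simp_all
  ultimately show ?thesis
    unfolding rlsvi_bound_def by linarith
qed

lemma abs_rlsvi_op_le:
  fixes h :: "('s::finite, 'a::{finite,linorder}) episode list"
  assumes lam: "lam > 0" and v: "v > 0" and t: "t < H"
    and Q: "\<And>y a. \<bar>Q y a\<bar> \<le> K" and K: "0 \<le> K"
  shows "\<bar>rlsvi_op th v lam h xi t Q y a\<bar> \<le> rlsvi_bound lam H th xi + K"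
proof -
  let ?n = "length (obs h t y a)"
  let ?L = "\<Sum>z \<leftarrow> obs h t y a. of_bool (fst z) + vmax Q (snd z)"
  have "\<bar>sig2 lam v ?n * (th t y a / lam + (1 / v) * ?L)\<bar> \<le> \<bar>th t y a\<bar> + (1 + K)"
    using abs_sum_list_map_le[OF abs_reward_plus_vmax_le[OF Q]] K
    by (intro abs_posterior_mean_le[OF lam v]) simp_all
  moreover have "\<bar>sqrt (sig2 lam v ?n) * xi (t, y, a)\<bar> \<le> sqrt lam * (\<Sum>k\<in>{..<H} \<times> UNIV. \<bar>xi k\<bar>)"
  proof -
    have "\<bar>xi (t, y, a)\<bar> \<le> (\<Sum>k\<in>{..<H} \<times> UNIV. \<bar>xi k\<bar>)"
      using t by (intro member_le_sum[where f = "\<lambda>k. \<bar>xi k\<bar>"]) auto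
    moreover have "sqrt (sig2 lam v ?n) \<le> sqrt lam"
      using sig2_le[OF lam v] by simp
    ultimately show ?thesis
      using sig2_pos[OF lam v, of ?n] by (simp add: abs_mult mult_mono)
  qed
  moreover have "\<bar>th t y a\<bar> \<le> (\<Sum>(t, y, a)\<in>{..<H} \<times> UNIV. \<bar>th t y a\<bar>)"
    by (rule member_le_sum[of "(t, y, a)" _ "\<lambda>(t, y, a). \<bar>th t y a\<bar>", simplified]) (use t in auto)
  ultimately show ?thesis
    unfolding rlsvi_op_def rlsvi_bound_def
    by (intro order_trans[OF abs_triangle_ineq]) linarith
qed

lemma abs_Qrl_le:
  fixes h :: "('s::finite, 'a::{finite,linorder}) episode list"
  assumes lam: "lam > 0" and v: "v > 0"
  shows "\<bar>Qrl th v lam H h xi t y a\<bar> \<le> real (H - t) * rlsvi_bound lam H th xi"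
proof (cases "t \<le> H")
  case True
  then show ?thesis
  proof (induction t arbitrary: y a rule: inc_induct)
    case (step n)
    have "0 \<le> real (H - Suc n) * rlsvi_bound lam H th xi"
      using rlsvi_bound_ge_1[OF lam, of H th xi] by simp
    from abs_rlsvi_op_le[where Q = "Qrl th v lam H h xi (Suc n)" and th = th and h = h and xi = xi
        and y = y and a = a, OF lam v step.hyps(2) step.IH this]
    have "\<bar>Qrl th v lam H h xi n y a\<bar> \<le> rlsvi_bound lam H th xi + real (H - Suc n) * rlsvi_bound lam H th xi"
      using step.hyps by (simp only: rlsvi_op_Qrl_Suc)
    then show ?case
      using step.hyps by (simp add: of_nat_diff algebra_simps)
  qed (simp add: Qrl_def)
qed (simp add: Qrl_def)

lemma abs_Qrl_le_horizon:
  fixes h :: "('s::finite, 'a::{finite,linorder}) episode list"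
  assumes "lam > 0" and "v > 0"
  shows "\<bar>Qrl th v lam H h xi t y a\<bar> \<le> real H * rlsvi_bound lam H th xi"
proof -
  have "\<bar>Qrl th v lam H h xi t y a\<bar> \<le> real (H - t) * rlsvi_bound lam H th xi"
    by (rule abs_Qrl_le[OF assms])
  also have "\<dots> \<le> real H * rlsvi_bound lam H th xi"
    using rlsvi_bound_ge_1[OF assms(1), of H th xi] by (intro mult_right_mono) simp_all
  finally show ?thesis .
qed

lemma borel_measurable_Qstar:
  assumes "\<And>t x a y. (\<lambda>M. pmf (trans M t x a) y) \<in> borel_measurable P"
  shows "(\<lambda>M. Qstar (M :: ('s::finite, 'a::finite) mdp) H t y a) \<in> borel_measurable P"
proof (cases "t \<le> H")
  case True
  then show ?thesis
  proof (induction t arbitrary: y a rule: inc_induct)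
    case (step n)
    have "(\<lambda>M. bellman M n (Qstar M H (Suc n)) y a) \<in> borel_measurable P"
      unfolding bellman_eq_sum
      by (intro borel_measurable_sum borel_measurable_times borel_measurable_add borel_measurable_const
          borel_measurable_vmax assms step.IH)
    with step.hyps show ?case by (simp add: bellman_Qstar_Suc)
  qed (simp add: Qstar_def)
qed (simp add: Qstar_def)

lemma borel_measurable_bellman_Qrl:
  fixes h :: "('s::finite, 'a::{finite,linorder}) episode list"
  assumes "\<And>t x a y. (\<lambda>M. pmf (trans M t x a) y) \<in> borel_measurable P"
  shows "(\<lambda>(M, xi). bellman M t (Qrl th v lam H h xi t') y a) \<in> borel_measurable (P \<Otimes>\<^sub>M noiseM H)"
  unfolding bellman_eq_sum split_beta'
  by (intro borel_measurable_sum borel_measurable_times borel_measurable_add borel_measurable_const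
      measurable_compose[OF measurable_fst assms] borel_measurable_vmax
      measurable_compose[OF measurable_snd borel_measurable_Qrl])

lemma set_pmf_episode_pmf: "e \<in> set_pmf (episode_pmf M H \<pi>) \<Longrightarrow> length (snd e) = H"
  by (auto simp: episode_pmf_def dest: set_pmf_traj)

lemma finite_episodes_length:
  "finite {e :: ('s::finite, 'a::finite) episode. length (snd e) = H}"
proof -
  have "{e :: ('s, 'a) episode. length (snd e) = H} = UNIV \<times> {s. set s \<subseteq> UNIV \<and> length s = H}"
    by auto
  then show ?thesis
    using finite_lists_length_eq[of "UNIV :: ('a \<times> bool \<times> 's) set" H] by simp
qed

lemma borel_measurable_integral_episode_pol:
  fixes h :: "('s::finite, 'a::{finite,linorder}) episode list"
    and F :: "('s, 'a) mdp \<Rightarrow> (nat \<times> 's \<times> 'a \<Rightarrow> real) \<Rightarrow> ('s, 'a) episode \<Rightarrow> real"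
  assumes "\<And>x. (\<lambda>M. pmf (init M) x) \<in> borel_measurable P"
    and "\<And>t x a y. (\<lambda>M. pmf (trans M t x a) y) \<in> borel_measurable P"
    and F: "\<And>e. (\<lambda>(M, xi). F M xi e) \<in> borel_measurable (P \<Otimes>\<^sub>M noiseM H)"
  shows "(\<lambda>(M, xi). \<integral>e. F M xi e \<partial>measure_pmf (episode_pmf M H (pol th v lam H h xi)))
     \<in> borel_measurable (P \<Otimes>\<^sub>M noiseM H)"
proof -
  have "(\<integral>e. F M xi e \<partial>measure_pmf (episode_pmf M H (pol th v lam H h xi))) =
      (\<Sum>e\<in>{e. length (snd e) = H}. F M xi e * pmf (episode_pmf M H (pol th v lam H h xi)) e)" for M xi
    by (rule integral_measure_pmf_real[OF finite_episodes_length]) (auto dest: set_pmf_episode_pmf)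
  moreover have "(\<lambda>(M, xi). F M xi e * pmf (episode_pmf M H (pol th v lam H h xi)) e)
      \<in> borel_measurable (P \<Otimes>\<^sub>M noiseM H)" for e
    using F[of e] borel_measurable_pmf_episode_pol[OF assms(1,2), of H th v lam h e]
    unfolding split_beta' by (rule borel_measurable_times)
  ultimately show ?thesis
    unfolding split_beta' by simp
qed

lemma abs_integral_le_const:
  fixes f :: "'b \<Rightarrow> real"
  assumes "prob_space N" and "\<And>x. \<bar>f x\<bar> \<le> K"
  shows "\<bar>\<integral>x. f x \<partial>N\<bar> \<le> K"
proof (cases "integrable N f")
  case True
  interpret prob_space N by (rule assms(1))
  have "\<bar>\<integral>x. f x \<partial>N\<bar> \<le> (\<integral>x. \<bar>f x\<bar> \<partial>N)" by (rule integral_abs_bound)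
  also have "\<dots> \<le> K"
    using True assms(2) by (intro integral_le_const) auto
  finally show ?thesis .
next
  case False
  then show ?thesis using assms(2)[of undefined] by (simp add: not_integrable_integral_eq)
qed

lemma abs_integral_le_integral:
  fixes f g :: "'b \<Rightarrow> real"
  assumes g: "integrable N g" and fg: "\<And>x. \<bar>f x\<bar> \<le> g x"
  shows "\<bar>\<integral>x. f x \<partial>N\<bar> \<le> (\<integral>x. g x \<partial>N)"
proof (cases "integrable N f")
  case True
  have "\<bar>\<integral>x. f x \<partial>N\<bar> \<le> (\<integral>x. \<bar>f x\<bar> \<partial>N)" by (rule integral_abs_bound)
  also have "\<dots> \<le> (\<integral>x. g x \<partial>N)"
    using True g fg by (intro integral_mono) auto
  finally show ?thesis .
next
  case False
  have "0 \<le> (\<integral>x. g x \<partial>N)"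
    using fg by (intro integral_nonneg_AE AE_I2) (meson abs_ge_zero order_trans)
  then show ?thesis using False by (simp add: not_integrable_integral_eq)
qed

lemma borel_measurable_integral_histM:
  fixes P :: "('s::finite, 'a::{finite,linorder}) mdp measure"
    and g :: "('s, 'a) mdp \<Rightarrow> ('s, 'a) episode list \<Rightarrow> real"
  assumes init: "\<And>x. (\<lambda>M. pmf (init M) x) \<in> borel_measurable P"
    and trans: "\<And>t x a y. (\<lambda>M. pmf (trans M t x a) y) \<in> borel_measurable P"
    and "\<And>h. (\<lambda>M. g M h) \<in> borel_measurable P" and "\<And>M h. \<bar>g M h\<bar> \<le> B"
  shows "(\<lambda>M. \<integral>h. g M h \<partial>histM th v lam H M k) \<in> borel_measurable P"
  using assms(3,4)
proof (induction k arbitrary: g)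
  case 0
  then show ?case by (simp add: integral_return)
next
  case (Suc k)
  define g' where "g' M h =
    (\<integral>xi. (\<integral>e. g M (h @ [e]) \<partial>measure_pmf (episode_pmf M H (pol th v lam H h xi))) \<partial>noiseM H)" for M h
  interpret noise: prob_space "noiseM H" by (rule prob_space_noiseM)
  have "(\<lambda>M. \<integral>h. g' M h \<partial>histM th v lam H M k) \<in> borel_measurable P"
  proof (rule Suc.IH)
    show "(\<lambda>M. g' M h) \<in> borel_measurable P" for h
      unfolding g'_def
      by (intro noise.borel_measurable_lebesgue_integral borel_measurable_integral_episode_pol[OF init trans])
         (simp add: split_beta' measurable_compose[OF measurable_fst Suc.prems(1)])
    show "\<bar>g' M h\<bar> \<le> B" for M h
      unfolding g'_def
      by (intro abs_integral_le_const prob_space_noiseM prob_space_measure_pmf Suc.prems(2))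
  qed
  moreover have "(\<integral>h. g M h \<partial>histM th v lam H M (Suc k)) = (\<integral>h. g' M h \<partial>histM th v lam H M k)" for M
    unfolding g'_def by (rule integral_histM_Suc) (rule Suc.prems(2))
  ultimately show ?case by simp
qed

lemma integrable_abs_std_normal: "integrable std_normal_distribution (\<lambda>x. \<bar>x\<bar>)"
proof (rule Bochner_Integration.integrable_bound)
  interpret prob_space std_normal_distribution by (rule prob_space_normal_density) simp
  show "integrable std_normal_distribution (\<lambda>x. 1 + x ^ 2)"
    using integrable_std_normal_distribution_moment[of 2] by simp
  show "AE x in std_normal_distribution. norm \<bar>x\<bar> \<le> norm (1 + x ^ 2)"
  proof (rule AE_I2)
    fix x :: real
    have "0 \<le> (\<bar>x\<bar> - 1) ^ 2" by simp
    then show "norm \<bar>x\<bar> \<le> norm (1 + x ^ 2)"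
      by (simp add: power2_eq_square algebra_simps abs_mult_self_eq)
  qed
qed simp

lemma integrable_abs_noise_component:
  assumes "t < H"
  shows "integrable (noiseM H) (\<lambda>xi. \<bar>xi (t, y, a)\<bar>)"
proof -
  let ?c = "\<lambda>xi. xi (t, y, a)"
  have "distr (noiseM H) std_normal_distribution ?c = std_normal_distribution"
    unfolding noiseM_def using assms
    by (intro distr_PiM_component) (simp_all add: prob_space_normal_density)
  moreover have c: "?c \<in> measurable (noiseM H) std_normal_distribution"
    by (subst measurable_cong_sets[OF refl sets_density]) (simp add: measurable_noise_component[OF assms])
  ultimately show ?thesis
    using integrable_abs_std_normal by (simp add: integrable_distr_eq[OF c, symmetric])
qed

lemma integrable_rlsvi_bound: "integrable (noiseM H) (rlsvi_bound lam H th)"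
proof -
  interpret prob_space "noiseM H" by (rule prob_space_noiseM)
  have "integrable (noiseM H) (\<lambda>xi. \<Sum>k\<in>{..<H} \<times> UNIV. \<bar>xi k\<bar>)"
    by (rule Bochner_Integration.integrable_sum) (auto intro: integrable_abs_noise_component)
  then show ?thesis
    unfolding rlsvi_bound_def [abs_def]
    by (intro Bochner_Integration.integrable_add integrable_const integrable_mult_right)
qed

definition iterated_integrable ::
    "'m measure \<Rightarrow> ('m \<Rightarrow> 'h measure) \<Rightarrow> 'n measure \<Rightarrow> ('m \<Rightarrow> 'h \<Rightarrow> 'n \<Rightarrow> real) \<Rightarrow> bool" where
  "iterated_integrable P K N F \<longleftrightarrow>
     (\<forall>M\<in>space P. \<forall>h. integrable N (F M h)) \<and>
     (\<forall>M\<in>space P. integrable (K M) (\<lambda>h. \<integral>x. F M h x \<partial>N)) \<and>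
     integrable P (\<lambda>M. \<integral>h. (\<integral>x. F M h x \<partial>N) \<partial>K M)"

lemma iterated_integral_add_diff:
  assumes F: "iterated_integrable P K N F" and G: "iterated_integrable P K N G"
    and R: "iterated_integrable P K N R"
    and eq: "\<And>M h x. M \<in> space P \<Longrightarrow> F' M h x = F M h x - G M h x + R M h x"
  shows "(\<integral>M. (\<integral>h. (\<integral>x. F' M h x \<partial>N) \<partial>K M) \<partial>P) =
    (\<integral>M. (\<integral>h. (\<integral>x. F M h x \<partial>N) \<partial>K M) \<partial>P) - (\<integral>M. (\<integral>h. (\<integral>x. G M h x \<partial>N) \<partial>K M) \<partial>P)
    + (\<integral>M. (\<integral>h. (\<integral>x. R M h x \<partial>N) \<partial>K M) \<partial>P)"
proof -
  let ?I = "\<lambda>F M h. \<integral>x. F M h x \<partial>N" and ?J = "\<lambda>F M. \<integral>h. (\<integral>x. F M h x \<partial>N) \<partial>K M"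
  have "?I F' M h = ?I F M h - ?I G M h + ?I R M h" if "M \<in> space P" for M h
    using F G R that by (simp add: eq iterated_integrable_def)
  then have "?J F' M = ?J F M - ?J G M + ?J R M" if "M \<in> space P" for M
    using F G R that by (simp add: iterated_integrable_def)
  then have "(\<integral>M. ?J F' M \<partial>P) = (\<integral>M. ?J F M - ?J G M + ?J R M \<partial>P)"
    by (intro Bochner_Integration.integral_cong) simp_all
  then show ?thesis
    using F G R by (simp add: iterated_integrable_def)
qed

lemma iterated_integrable_episode_expectation:
  fixes P :: "('s::finite, 'a::{finite,linorder}) mdp measure"
    and f :: "('s, 'a) mdp \<Rightarrow> ('s, 'a) episode list \<Rightarrow> (nat \<times> 's \<times> 'a \<Rightarrow> real) \<Rightarrow> ('s, 'a) episode \<Rightarrow> real"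
  assumes P: "prob_space P"
    and init: "\<And>x. (\<lambda>M. pmf (init M) x) \<in> borel_measurable P"
    and trans: "\<And>t x a y. (\<lambda>M. pmf (trans M t x a) y) \<in> borel_measurable P"
    and f: "\<And>h e. (\<lambda>(M, xi). f M h xi e) \<in> borel_measurable (P \<Otimes>\<^sub>M noiseM H)"
    and g: "integrable (noiseM H) g" and f_bound: "\<And>M h xi e. \<bar>f M h xi e\<bar> \<le> g xi"
  shows "iterated_integrable P (\<lambda>M. histM th v lam H M l) (noiseM H)
    (\<lambda>M h xi. \<integral>e. f M h xi e \<partial>measure_pmf (episode_pmf M H (pol th v lam H h xi)))"
proof -
  interpret noise: prob_space "noiseM H" by (rule prob_space_noiseM)
  define E where "E M h xi = (\<integral>e. f M h xi e \<partial>measure_pmf (episode_pmf M H (pol th v lam H h xi)))" for M h xi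
  define C where "C = (\<integral>xi. g xi \<partial>noiseM H)"
  have E_measurable: "(\<lambda>(M, xi). E M h xi) \<in> borel_measurable (P \<Otimes>\<^sub>M noiseM H)" for h
    unfolding E_def by (rule borel_measurable_integral_episode_pol[OF init trans f])
  have E_bound: "\<bar>E M h xi\<bar> \<le> g xi" for M h xi
    unfolding E_def by (intro abs_integral_le_const prob_space_measure_pmf f_bound)
  have E_integral_bound: "\<bar>\<integral>xi. E M h xi \<partial>noiseM H\<bar> \<le> C" for M h
    unfolding C_def by (rule abs_integral_le_integral[OF g E_bound])
  have "integrable (noiseM H) (E M h)" if "M \<in> space P" for M h
  proof (rule Bochner_Integration.integrable_bound[OF g])
    show "E M h \<in> borel_measurable (noiseM H)"
      using measurable_Pair2[OF E_measurable that] by simp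
    show "AE xi in noiseM H. norm (E M h xi) \<le> norm (g xi)"
      using E_bound by (intro AE_I2) (metis abs_ge_zero order_trans real_norm_def abs_of_nonneg)
  qed
  moreover have "integrable (histM th v lam H M l) (\<lambda>h. \<integral>xi. E M h xi \<partial>noiseM H)" for M
    using E_integral_bound
    by (intro finite_measure.integrable_const_bound[where B = C] prob_space.finite_measure prob_space_histM)
       (simp_all add: measurable_cong_sets[OF sets_histM refl])
  moreover have "integrable P (\<lambda>M. \<integral>h. (\<integral>xi. E M h xi \<partial>noiseM H) \<partial>histM th v lam H M l)"
  proof (rule finite_measure.integrable_const_bound[where B = C])
    show "finite_measure P" using P by (rule prob_space.finite_measure)
    show "AE M in P. norm (\<integral>h. (\<integral>xi. E M h xi \<partial>noiseM H) \<partial>histM th v lam H M l) \<le> C"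
      using abs_integral_le_const[OF prob_space_histM E_integral_bound] by (intro AE_I2) simp
    show "(\<lambda>M. \<integral>h. (\<integral>xi. E M h xi \<partial>noiseM H) \<partial>histM th v lam H M l) \<in> borel_measurable P"
      using E_integral_bound E_measurable
      by (intro borel_measurable_integral_histM[OF init trans] noise.borel_measurable_lebesgue_integral)
  qed
  ultimately show ?thesis
    unfolding iterated_integrable_def E_def by blast
qed

section \<open>The regret decomposition in expectation\<close>

lemma abs_bellman_errors_le:
  fixes h :: "('s::finite, 'a::{finite,linorder}) episode list" and M :: "('s, 'a) mdp"
  assumes lam: "lam > 0" and v: "v > 0"
  shows "\<bar>\<Sum>t<H. rlsvi_op th v lam h xi t (Qrl th v lam H h xi (Suc t)) (ep_state e t) (ep_action e t)
              - bellman M t (Qrl th v lam H h xi (Suc t)) (ep_state e t) (ep_action e t)\<bar>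
    \<le> real H * (1 + 2 * (real H * rlsvi_bound lam H th xi))"
proof -
  let ?W = "real H * rlsvi_bound lam H th xi"
  have "\<bar>rlsvi_op th v lam h xi t (Qrl th v lam H h xi (Suc t)) y a
      - bellman M t (Qrl th v lam H h xi (Suc t)) y a\<bar> \<le> 1 + 2 * ?W" if "t < H" for t y a
  proof -
    have "\<bar>Qrl th v lam H h xi t y a\<bar> \<le> ?W" and "\<bar>bellman M t (Qrl th v lam H h xi (Suc t)) y a\<bar> \<le> 1 + ?W"
      by (intro abs_Qrl_le_horizon[OF lam v] abs_bellman_le)+
    with that show ?thesis by (simp add: rlsvi_op_Qrl_Suc)
  qed
  then have "(\<Sum>t<H. \<bar>rlsvi_op th v lam h xi t (Qrl th v lam H h xi (Suc t)) (ep_state e t) (ep_action e t)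
      - bellman M t (Qrl th v lam H h xi (Suc t)) (ep_state e t) (ep_action e t)\<bar>) \<le> (\<Sum>t<H. 1 + 2 * ?W)"
    by (intro sum_mono) simp
  then show ?thesis
    by (intro order_trans[OF sum_abs]) simp
qed

lemma rl_expect_regret_decomposition:
  fixes prior :: "('s::finite, 'a::{finite,linorder}) mdp measure"
  assumes "prob_space prior"
    and "\<And>x. (\<lambda>M. pmf (init M) x) \<in> borel_measurable prior"
    and trans: "\<And>t x a y. (\<lambda>M. pmf (trans M t x a) y) \<in> borel_measurable prior"
    and v: "v > 0" and lam: "lam > 0"
  shows "rl_expect th v lam H prior l
           (\<lambda>M h xi e. Vstar M H (fst e) - Vpi M H (pol th v lam H h xi) (fst e)) =
         rl_expect th v lam H prior l (\<lambda>M h xi e. vmax (Qstar M H 0) (fst e))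
         - rl_expect th v lam H prior l (\<lambda>M h xi e. vmax (Qrl th v lam H h xi 0) (fst e))
         + rl_expect th v lam H prior l
           (\<lambda>M h xi e. \<Sum>t<H.
              rlsvi_op th v lam h xi t (Qrl th v lam H h xi (Suc t)) (ep_state e t) (ep_action e t)
              - bellman M t (Qrl th v lam H h xi (Suc t)) (ep_state e t) (ep_action e t))"
proof -
  note integrable = iterated_integrable_episode_expectation[OF assms(1-3)]
  interpret noise: prob_space "noiseM H" by (rule prob_space_noiseM)
  have "iterated_integrable prior (\<lambda>M. histM th v lam H M l) (noiseM H)
      (\<lambda>M h xi. \<integral>e. vmax (Qstar M H 0) (fst e) \<partial>measure_pmf (episode_pmf M H (pol th v lam H h xi)))"
  proof (rule integrable[where g = "\<lambda>_. real H"])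
    show "(\<lambda>(M, xi). vmax (Qstar M H 0) (fst e)) \<in> borel_measurable (prior \<Otimes>\<^sub>M noiseM H)" for e
      unfolding split_beta'
      by (rule measurable_compose[OF measurable_fst borel_measurable_vmax[OF borel_measurable_Qstar[OF trans]]])
    show "\<bar>vmax (Qstar M H 0) (fst e)\<bar> \<le> real H" for M :: "('s, 'a) mdp" and e :: "('s, 'a) episode"
      using abs_Qstar_le[of M H 0] by (intro abs_vmax_le) simp
  qed simp
  moreover have "iterated_integrable prior (\<lambda>M. histM th v lam H M l) (noiseM H)
      (\<lambda>M h xi. \<integral>e. vmax (Qrl th v lam H h xi 0) (fst e) \<partial>measure_pmf (episode_pmf M H (pol th v lam H h xi)))"
  proof (rule integrable[where g = "\<lambda>xi. real H * rlsvi_bound lam H th xi"])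
    show "(\<lambda>(M, xi). vmax (Qrl th v lam H h xi 0) (fst e)) \<in> borel_measurable (prior \<Otimes>\<^sub>M noiseM H)" for h e
      unfolding split_beta'
      by (rule measurable_compose[OF measurable_snd borel_measurable_vmax[OF borel_measurable_Qrl]])
    show "\<bar>vmax (Qrl th v lam H h xi 0) (fst e)\<bar> \<le> real H * rlsvi_bound lam H th xi" for h xi e
      by (intro abs_vmax_le abs_Qrl_le_horizon[OF lam v])
  qed (simp add: integrable_rlsvi_bound)
  moreover have "iterated_integrable prior (\<lambda>M. histM th v lam H M l) (noiseM H)
      (\<lambda>M h xi. \<integral>e. (\<Sum>t<H.
              rlsvi_op th v lam h xi t (Qrl th v lam H h xi (Suc t)) (ep_state e t) (ep_action e t)
              - bellman M t (Qrl th v lam H h xi (Suc t)) (ep_state e t) (ep_action e t))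
        \<partial>measure_pmf (episode_pmf M H (pol th v lam H h xi)))"
  proof (rule integrable[where g = "\<lambda>xi. real H * (1 + 2 * (real H * rlsvi_bound lam H th xi))"])
    show "(\<lambda>(M, xi). \<Sum>t<H.
              rlsvi_op th v lam h xi t (Qrl th v lam H h xi (Suc t)) (ep_state e t) (ep_action e t)
              - bellman M t (Qrl th v lam H h xi (Suc t)) (ep_state e t) (ep_action e t))
        \<in> borel_measurable (prior \<Otimes>\<^sub>M noiseM H)" for h e
      using borel_measurable_bellman_Qrl[OF trans]
      by (auto simp: rlsvi_op_Qrl_Suc split_beta' intro!: borel_measurable_sum borel_measurable_diff
          measurable_compose[OF measurable_snd borel_measurable_Qrl])
    show "integrable (noiseM H) (\<lambda>xi. real H * (1 + 2 * (real H * rlsvi_bound lam H th xi)))"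
      by (intro integrable_mult_right Bochner_Integration.integrable_add noise.integrable_const
          integrable_rlsvi_bound)
  qed (rule abs_bellman_errors_le[OF lam v])
  ultimately show ?thesis
    unfolding rl_expect_def
    by (rule iterated_integral_add_diff) (rule episode_regret_decomposition)
qed

theorem mainTheorem3:
  fixes prior :: "('s::finite, 'a::{finite,linorder}) mdp measure"
    and th :: "nat \<Rightarrow> 's \<Rightarrow> 'a \<Rightarrow> real"
    and v lam :: real and H l :: nat
  assumes "prob_space prior"
    and "\<And>x. (\<lambda>M. pmf (init M) x) \<in> borel_measurable prior"
    and "\<And>t x a y. (\<lambda>M. pmf (trans M t x a) y) \<in> borel_measurable prior"
    and "v > 0" and "lam > 0"
    and "rl_expect th v lam H prior l (\<lambda>M h xi e. vmax (Qrl th v lam H h xi 0) (fst e))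
         \<ge> rl_expect th v lam H prior l (\<lambda>M h xi e. vmax (Qstar M H 0) (fst e))"
  shows "rl_expect th v lam H prior l
           (\<lambda>M h xi e. Vstar M H (fst e) - Vpi M H (pol th v lam H h xi) (fst e))
         \<le> rl_expect th v lam H prior l
           (\<lambda>M h xi e. \<Sum>t<H.
              rlsvi_op th v lam h xi t (Qrl th v lam H h xi (Suc t)) (ep_state e t) (ep_action e t)
              - bellman M t (Qrl th v lam H h xi (Suc t)) (ep_state e t) (ep_action e t))"
  using rl_expect_regret_decomposition[OF assms(1-5), of th H l] assms(6) by linarith

end
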